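(* Let $\lambda=(\lambda_1,\dots,\lambda_I)$, $\mu=(\mu_1,\dots,\mu_J)$ be partitions of $n$. Let $(\sigma_t)_{t\ge0}$ be the random transpositions random walk on $S_n$, i.e. the Markov chain with transition matrix $P(x,y)=Q(yx^{-1})$ where $Q(\sigma)=2/n^2$ if $\sigma$ is a transposition, $Q(\mathrm{id})=1/n$, and $Q(\sigma)=0$ otherwise. Then, for any initial distribution, the process $(T^{\sigma_t})_{t\ge0}$ on $\mathcal{T}_{\lambda,\mu}$ is a Markov chain, and its transition matrix is the random transpositions chain on $\mathcal{T}_{\lambda,\mu}$ defined in the context: $P(T,T')=\frac{2T_{i_1j_1}T_{i_2j_2}}{n^2}$ if $T'=F_{(i_1,j_1),(i_2,j_2)}(T)\ne T$, $P(T,T)$ the remaining mass, and $0$ otherwise.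
   Context: $\mathcal{T}_{\lambda,\mu}$ is the set of $I\times J$ nonnegative integer tables with row sums $\lambda_i$ and column sums $\mu_j$. Let $L_1=\{1,\dots,\lambda_1\}$, $L_2=\{\lambda_1+1,\dots,\lambda_1+\lambda_2\}$, …, $L_I=\{n-\lambda_I+1,\dots,n\}$, and define $M_1,\dots,M_J$ from $\mu$ in the same way. For $x\in S_n$, $T^x\in\mathcal{T}_{\lambda,\mu}$ is the table with $T^x_{ij}=\#\{\ell\in L_i: x(\ell)\in M_j\}$ (this map identifies $\mathcal{T}_{\lambda,\mu}$ with the double cosets $S_\lambda\backslash S_n/S_\mu$ of Young subgroups). For $i_1\ne i_2$, $j_1\ne j_2$, $F_{(i_1,j_1),(i_2,j_2)}(T)$ is obtained from $T$ by subtracting $1$ at $(i_1,j_1)$ and $(i_2,j_2)$ and adding $1$ at $(i_1,j_2)$ and $(i_2,j_1)$. *)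

theory Defs
  imports "HOL-Combinatorics.Combinatorics" Complex_Main
begin

definition is_partition :: "nat \<Rightarrow> nat list \<Rightarrow> bool" where
  "is_partition n lam \<longleftrightarrow> sum_list lam = n \<and> (\<forall>k\<in>set lam. 0 < k) \<and> sorted_wrt (\<ge>) lam"

text \<open>Block i (0-based index, i < length lam) of {1..n}: L_(i+1) in the paper.\<close>
definition block :: "nat list \<Rightarrow> nat \<Rightarrow> nat set" where
  "block lam i = {sum_list (take i lam) + 1 .. sum_list (take i lam) + lam ! i}"

text \<open>Contingency tables with row sums lam and column sums mu (0-based indices, zero outside).\<close>
definition tables :: "nat list \<Rightarrow> nat list \<Rightarrow> (nat \<Rightarrow> nat \<Rightarrow> nat) set" where
  "tables lam mu = {T. (\<forall>i j. (length lam \<le> i \<or> length mu \<le> j) \<longrightarrow> T i j = 0)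
      \<and> (\<forall>i < length lam. (\<Sum>j<length mu. T i j) = lam ! i)
      \<and> (\<forall>j < length mu. (\<Sum>i<length lam. T i j) = mu ! j)}"

definition table_of :: "nat list \<Rightarrow> nat list \<Rightarrow> (nat \<Rightarrow> nat) \<Rightarrow> nat \<Rightarrow> nat \<Rightarrow> nat" where
  "table_of lam mu x i j =
     (if i < length lam \<and> j < length mu then card {l \<in> block lam i. x l \<in> block mu j} else 0)"

definition Fmove :: "nat \<times> nat \<Rightarrow> nat \<times> nat \<Rightarrow> (nat \<Rightarrow> nat \<Rightarrow> nat) \<Rightarrow> nat \<Rightarrow> nat \<Rightarrow> nat" where
  "Fmove c1 c2 T = (\<lambda>i j.
     if (i, j) = c1 \<or> (i, j) = c2 then T i j - 1
     else if (i, j) = (fst c1, snd c2) \<or> (i, j) = (fst c2, snd c1) then T i j + 1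
     else T i j)"

definition rt_Q :: "nat \<Rightarrow> (nat \<Rightarrow> nat) \<Rightarrow> real" where
  "rt_Q n \<sigma> = (if \<exists>a b. a \<in> {1..n} \<and> b \<in> {1..n} \<and> a \<noteq> b \<and> \<sigma> = transpose a b then 2 / real n ^ 2
              else if \<sigma> = id then 1 / real n else 0)"

definition rt_P :: "nat \<Rightarrow> (nat \<Rightarrow> nat) \<Rightarrow> (nat \<Rightarrow> nat) \<Rightarrow> real" where
  "rt_P n x y = rt_Q n (y \<circ> inv x)"

definition is_move :: "nat list \<Rightarrow> nat list \<Rightarrow> (nat \<Rightarrow> nat \<Rightarrow> nat) \<Rightarrow> (nat \<Rightarrow> nat \<Rightarrow> nat)
    \<Rightarrow> nat \<Rightarrow> nat \<Rightarrow> nat \<Rightarrow> nat \<Rightarrow> bool" where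
  "is_move lam mu T T' i1 j1 i2 j2 \<longleftrightarrow>
     i1 < length lam \<and> i2 < length lam \<and> j1 < length mu \<and> j2 < length mu \<and>
     i1 \<noteq> i2 \<and> j1 \<noteq> j2 \<and> 0 < T i1 j1 \<and> 0 < T i2 j2 \<and> T' = Fmove (i1, j1) (i2, j2) T"

definition table_K_off :: "nat list \<Rightarrow> nat list \<Rightarrow> (nat \<Rightarrow> nat \<Rightarrow> nat) \<Rightarrow> (nat \<Rightarrow> nat \<Rightarrow> nat) \<Rightarrow> real" where
  "table_K_off lam mu T T' =
     (if T' \<noteq> T \<and> (\<exists>i1 j1 i2 j2. is_move lam mu T T' i1 j1 i2 j2)
      then (SOME v. \<exists>i1 j1 i2 j2. is_move lam mu T T' i1 j1 i2 j2 \<and>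
                   v = 2 * real (T i1 j1) * real (T i2 j2) / real (sum_list lam) ^ 2)
      else 0)"

definition table_K :: "nat list \<Rightarrow> nat list \<Rightarrow> (nat \<Rightarrow> nat \<Rightarrow> nat) \<Rightarrow> (nat \<Rightarrow> nat \<Rightarrow> nat) \<Rightarrow> real" where
  "table_K lam mu T T' =
     (if T' = T then 1 - (\<Sum>T''\<in>tables lam mu - {T}. table_K_off lam mu T T'')
      else table_K_off lam mu T T')"

end

theory Submission
  imports Defs
begin

text \<open>
  Label each \<open>l \<in> {1..n}\<close> by its cell \<open>c(l) = (row block of l, column block of x l)\<close>, so that
  \<open>T\<^sup>x\<close> is the histogram of \<open>c\<close>. Conjugation invariance of \<open>Q\<close> makes \<open>P(x, \<cdot>)\<close> the law of
  \<open>x \<circ> (a b)\<close> with \<open>(a, b)\<close> uniform on \<open>{1..n}\<^sup>2\<close>. Composing with \<open>(a b)\<close> exchanges the column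
  labels of \<open>a\<close> and \<open>b\<close>: the table is unchanged if \<open>c(a)\<close> and \<open>c(b)\<close> share a row or a column,
  and is moved by \<open>F\<^bsub>c(a),c(b)\<^esub>\<close> otherwise. A move determines its two source cells (the cells
  where it decreases the table) up to order, so \<open>T \<rightarrow> F\<^bsub>c\<^sub>1,c\<^sub>2\<^esub>(T)\<close> is realised by exactly
  \<open>2 T(c\<^sub>1) T(c\<^sub>2)\<close> ordered pairs; the diagonal entry follows because both kernels are
  stochastic. Thus \<open>P\<close> satisfies Dynkin's lumpability criterion, and path probabilities of the
  lumped process factor through the chain on tables. Both sides are linear in the initial
  distribution \<open>\<nu>\<close>.
\<close>

lemma sum_card_fibres:
  assumes "finite S" "finite J" "k ` S \<subseteq> J"
  shows "(\<Sum>j\<in>J. card {l \<in> S. k l = j}) = card S"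
  using sum.group[OF assms, of "\<lambda>_. 1 :: nat"] by simp

lemma card_filter_remove2:
  assumes "finite A" "a \<in> A" "b \<in> A" "a \<noteq> b"
  shows "card {l \<in> A. P l} = card {l \<in> A - {a, b}. P l} + of_bool (P a) + of_bool (P b)"
proof -
  have "{l \<in> A. P l} = {l \<in> A - {a, b}. P l} \<union> {l \<in> {a}. P l} \<union> {l \<in> {b}. P l}"
    using assms by auto
  moreover have "card {l \<in> {c}. P l} = of_bool (P c)" for c
  proof -
    have "{l \<in> {c}. P l} = (if P c then {c} else {})"
      by auto
    then show ?thesis
      by simp
  qed
  ultimately show ?thesis
    using assms by (simp add: card_Un_disjoint Int_def)
qed

lemma card_filter_bij_betw:
  assumes "bij_betw h A A"
  shows "card {p \<in> A. Q (h p)} = card {p \<in> A. Q p}"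
proof (rule bij_betw_same_card)
  have hA: "h ` A = A"
    using assms by (rule bij_betw_imp_surj_on)
  have "inj_on h {p \<in> A. Q (h p)}"
    using bij_betw_imp_inj_on[OF assms] by (rule inj_on_subset) auto
  moreover have "h ` {p \<in> A. Q (h p)} = {p \<in> A. Q p}"
  proof (intro equalityI subsetI)
    fix p assume "p \<in> {p \<in> A. Q p}"
    moreover from this obtain q where "q \<in> A" "p = h q"
      using hA by blast
    ultimately show "p \<in> h ` {p \<in> A. Q (h p)}"
      by blast
  qed (use hA in blast)
  ultimately show "bij_betw h {p \<in> A. Q (h p)} {p \<in> A. Q p}"
    by (simp add: bij_betw_def)
qed

lemma card_fibre_comp_transpose:
  assumes "finite A" "a \<in> A" "b \<in> A"
  shows "card {l \<in> A. (r l, k (transpose a b l)) = c} + of_bool ((r a, k a) = c) + of_bool ((r b, k b) = c)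
       = card {l \<in> A. (r l, k l) = c} + of_bool ((r a, k b) = c) + of_bool ((r b, k a) = c)"
proof (cases "a = b")
  case False
  have "{l \<in> A - {a, b}. (r l, k (transpose a b l)) = c} = {l \<in> A - {a, b}. (r l, k l) = c}"
    by auto
  then show ?thesis
    using card_filter_remove2[OF assms False, of "\<lambda>l. (r l, k (transpose a b l)) = c"]
      card_filter_remove2[OF assms False, of "\<lambda>l. (r l, k l) = c"] by simp
qed simp

lemma block_subset:
  assumes "i < length lam"
  shows "block lam i \<subseteq> {1..sum_list lam}"
proof -
  have "sum_list lam = sum_list (take (Suc i) lam) + sum_list (drop (Suc i) lam)"
    by (metis append_take_drop_id sum_list_append)
  then show ?thesis
    using assms by (auto simp: block_def take_Suc_conv_app_nth)
qed

lemma block_unique: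
  assumes "i < length lam" "i' < length lam" "l \<in> block lam i" "l \<in> block lam i'"
  shows "i = i'"
proof -
  have False if "p < q" "q < length lam" "l \<in> block lam p" "l \<in> block lam q" for p q
  proof -
    have "sum_list (take (Suc p) lam) \<le> sum_list (take q lam)"
      using sum_list_append[of "take (Suc p) lam" "take (q - Suc p) (drop (Suc p) lam)"] that(1)
      by (simp add: take_add[symmetric])
    then show False
      using that by (auto simp: block_def take_Suc_conv_app_nth)
  qed
  then show ?thesis
    using assms by (metis linorder_neqE_nat)
qed

lemma block_cover: "l \<in> {1..sum_list lam} \<Longrightarrow> \<exists>i < length lam. l \<in> block lam i"
proof (induction lam arbitrary: l)
  case (Cons a lam)
  show ?case
  proof (cases "l \<le> a")
    case True
    then show ?thesis
      using Cons.prems by (intro exI[of _ 0]) (auto simp: block_def)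
  next
    case False
    then have "l - a \<in> {1..sum_list lam}"
      using Cons.prems by auto
    then obtain i where "i < length lam" "l - a \<in> block lam i"
      using Cons.IH by blast
    then show ?thesis
      using False by (intro exI[of _ "Suc i"]) (auto simp: block_def)
  qed
qed simp

text \<open>Only meaningful for \<open>l \<in> {1..sum_list lam}\<close>; elsewhere \<open>THE\<close> yields an unspecified value.\<close>

definition block_index :: "nat list \<Rightarrow> nat \<Rightarrow> nat" where
  "block_index lam l = (THE i. i < length lam \<and> l \<in> block lam i)"

lemma block_index_eqI: "i < length lam \<Longrightarrow> l \<in> block lam i \<Longrightarrow> block_index lam l = i"
  unfolding block_index_def using block_unique by blast

lemma block_index:
  assumes "l \<in> {1..sum_list lam}"
  shows "block_index lam l < length lam" "l \<in> block lam (block_index lam l)"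
  using block_cover[OF assms] block_index_eqI by metis+

lemma block_index_fibre:
  assumes "i < length lam"
  shows "{l \<in> {1..sum_list lam}. block_index lam l = i} = block lam i"
  using block_index block_index_eqI[OF assms] block_subset[OF assms] by blast

lemma card_block_index_fibre:
  assumes "i < length lam"
  shows "card {l \<in> {1..sum_list lam}. block_index lam l = i} = lam ! i"
  unfolding block_index_fibre[OF assms] by (simp add: block_def)

section \<open>The random transpositions walk\<close>

lemma transpose_eq_transpose_iff:
  assumes "a \<noteq> b"
  shows "transpose c d = transpose a b \<longleftrightarrow> (c, d) = (a, b) \<or> (c, d) = (b, a)"
proof
  assume eq: "transpose c d = transpose a b"
  then have "transpose c d a = b" "transpose c d b = a"
    by simp_all
  then show "(c, d) = (a, b) \<or> (c, d) = (b, a)"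
    using assms by (auto simp: transpose_eq_iff)
qed (auto simp: transpose_commute)

lemma rt_Q_eq_card:
  "rt_Q n \<sigma> = card {(a, b) \<in> {1..n} \<times> {1..n}. transpose a b = \<sigma>} / real n ^ 2"
proof -
  define A where "A = {1..n}"
  consider (transposition) a b where "a \<in> A" "b \<in> A" "a \<noteq> b" "\<sigma> = transpose a b"
    | (identity) "\<sigma> = id" "\<nexists>a b. a \<in> A \<and> b \<in> A \<and> a \<noteq> b \<and> \<sigma> = transpose a b"
    | (other) "\<sigma> \<noteq> id" "\<nexists>a b. a \<in> A \<and> b \<in> A \<and> a \<noteq> b \<and> \<sigma> = transpose a b"
    by (metis transpose_eq_id_iff)
  then show ?thesis
  proof cases
    case transposition
    then have "{(c, d) \<in> A \<times> A. transpose c d = \<sigma>} = {(a, b), (b, a)}"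
      using transpose_eq_transpose_iff[OF transposition(3)] by (auto simp: transpose_commute)
    then show ?thesis
      using transposition by (auto simp: rt_Q_def A_def)
  next
    case identity
    then have "{(c, d) \<in> A \<times> A. transpose c d = \<sigma>} = (\<lambda>a. (a, a)) ` A"
      by (auto simp: transpose_eq_id_iff)
    moreover have "card ((\<lambda>a. (a, a)) ` A) = n"
      by (subst card_image) (auto simp: inj_on_def A_def)
    moreover have "rt_Q n \<sigma> = 1 / real n"
      unfolding rt_Q_def using identity by (simp only: A_def if_False if_P)
    moreover have "real n / real n ^ 2 = 1 / real n"
      by (cases "n = 0") (simp_all add: power2_eq_square)
    ultimately show ?thesis
      unfolding A_def[symmetric] by simp
  next
    case other
    then have "{(c, d) \<in> A \<times> A. transpose c d = \<sigma>} = {}"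
      by (auto simp: transpose_eq_id_iff) blast
    then have "card {(c, d) \<in> A \<times> A. transpose c d = \<sigma>} = 0"
      by (simp only: card.empty)
    moreover have "rt_Q n \<sigma> = 0"
      unfolding rt_Q_def using other by (simp only: A_def if_False)
    ultimately show ?thesis
      unfolding A_def[symmetric] by simp
  qed
qed

lemma rt_P_eq_card:
  assumes x: "x permutes {1..n}"
  shows "rt_P n x y = card {(a, b) \<in> {1..n} \<times> {1..n}. x \<circ> transpose a b = y} / real n ^ 2"
proof -
  define A where "A = {1..n}"
  have step_iff: "transpose (x a) (x b) = y \<circ> inv x \<longleftrightarrow> x \<circ> transpose a b = y" for a b
  proof -
    have "transpose (x a) (x b) \<circ> x = x \<circ> transpose a b"
      using transpose_comp_eq[OF permutes_bij[OF x]] by (simp add: permutes_inverses(2)[OF x])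
    moreover have "f = y \<circ> inv x \<longleftrightarrow> f \<circ> x = y" for f
      using permutes_inv_o[OF x] by (auto simp: comp_assoc)
    ultimately show ?thesis
      by simp
  qed
  have "bij_betw (map_prod x x) (A \<times> A) (A \<times> A)"
    using permutes_imp_bij[OF x] by (simp add: A_def bij_betw_map_prod)
  have "card {(a, b) \<in> A \<times> A. x \<circ> transpose a b = y}
      = card {p \<in> A \<times> A. (\<lambda>(a, b). transpose a b = y \<circ> inv x) (map_prod x x p)}"
    by (rule arg_cong[where f = card]) (simp add: step_iff case_prod_unfold mem_Times_iff)
  also have "\<dots> = card {p \<in> A \<times> A. (\<lambda>(a, b). transpose a b = y \<circ> inv x) p}"
    using \<open>bij_betw (map_prod x x) (A \<times> A) (A \<times> A)\<close> by (rule card_filter_bij_betw)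
  also have "\<dots> = card {(a, b) \<in> A \<times> A. transpose a b = y \<circ> inv x}"
    by (rule arg_cong[where f = card]) auto
  finally show ?thesis
    by (simp add: rt_P_def rt_Q_eq_card A_def)
qed

lemma sum_rt_P_eq_card:
  assumes x: "x permutes {1..n}"
  shows "(\<Sum>y\<in>{y. y permutes {1..n} \<and> P y}. rt_P n x y)
       = card {(a, b) \<in> {1..n} \<times> {1..n}. P (x \<circ> transpose a b)} / real n ^ 2"
proof -
  define S where "S = {(a, b) \<in> {1..n} \<times> {1..n}. P (x \<circ> transpose a b)}"
  define J where "J = {y. y permutes {1..n} \<and> P y}"
  define step where "step = (\<lambda>(a, b). x \<circ> transpose a b)"
  have "finite J"
    unfolding J_def by (rule finite_subset[OF _ finite_permutations[of "{1..n}"]]) auto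
  moreover have "finite S"
    unfolding S_def by (rule finite_subset[of _ "{1..n} \<times> {1..n}"]) auto
  moreover have "step ` S \<subseteq> J"
  proof
    fix y assume "y \<in> step ` S"
    then obtain a b where "a \<in> {1..n}" "b \<in> {1..n}" "P (x \<circ> transpose a b)" "y = x \<circ> transpose a b"
      by (auto simp: S_def step_def simp del: atLeastAtMost_iff)
    then show "y \<in> J"
      using permutes_compose[OF permutes_swap_id x] by (simp add: J_def)
  qed
  ultimately have "(\<Sum>y\<in>J. card {p \<in> S. step p = y}) = card S"
    by (intro sum_card_fibres)
  moreover have "rt_P n x y = card {p \<in> S. step p = y} / real n ^ 2" if "y \<in> J" for y
  proof -
    have "{(a, b) \<in> {1..n} \<times> {1..n}. x \<circ> transpose a b = y} = {p \<in> S. step p = y}"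
      using that by (auto simp: S_def J_def step_def)
    then show ?thesis
      by (simp add: rt_P_eq_card[OF x])
  qed
  ultimately show ?thesis
    unfolding J_def[symmetric] S_def[symmetric]
    by (simp add: sum_divide_distrib[symmetric] flip: of_nat_sum)
qed

lemma sum_rt_P_permutations:
  assumes "1 \<le> n" "x permutes {1..n}"
  shows "(\<Sum>y\<in>{y. y permutes {1..n}}. rt_P n x y) = 1"
proof -
  have "{(a, b) \<in> {1..n} \<times> {1..n}. True} = {1..n} \<times> {1..n}" "{y. y permutes {1..n} \<and> True} = {y. y permutes {1..n}}"
    by auto
  from sum_rt_P_eq_card[OF assms(2), of "\<lambda>_. True", unfolded this]
  show ?thesis
    using assms(1) by (simp add: power2_eq_square)
qed

section \<open>Lumpability\<close>

lemma lumped_path_sum: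
  fixes P :: "'a \<Rightarrow> 'a \<Rightarrow> 'c::comm_semiring_1" and f :: "'a \<Rightarrow> 'b"
  assumes lump: "\<And>x b. x \<in> S \<Longrightarrow> (\<Sum>y\<in>{y \<in> S. f y = b}. P x y) = K (f x) b"
  shows "(\<Sum>xs\<in>{xs. length xs = Suc t \<and> (\<forall>k\<le>t. xs ! k \<in> S \<and> f (xs ! k) = bs k)}.
            \<nu> (xs ! 0) * (\<Prod>k<t. P (xs ! k) (xs ! Suc k)))
       = (\<Sum>x\<in>{x \<in> S. f x = bs 0}. \<nu> x) * (\<Prod>k<t. K (bs k) (bs (Suc k)))"
proof (induction t)
  case 0
  have "{xs. length xs = Suc 0 \<and> (\<forall>k\<le>0. xs ! k \<in> S \<and> f (xs ! k) = bs k)} = (\<lambda>x. [x]) ` {x \<in> S. f x = bs 0}"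
    by (auto simp: length_Suc_conv)
  then show ?case
    by (simp add: sum.reindex inj_on_def)
next
  case (Suc t)
  define paths where "paths t = {xs. length xs = Suc t \<and> (\<forall>k\<le>t. xs ! k \<in> S \<and> f (xs ! k) = bs k)}" for t
  define weight where "weight t xs = \<nu> (xs ! 0) * (\<Prod>k<t. P (xs ! k) (xs ! Suc k))" for t xs
  have paths_Suc: "paths (Suc t) = (\<lambda>(xs, y). xs @ [y]) ` (paths t \<times> {y \<in> S. f y = bs (Suc t)})"
  proof (intro equalityI subsetI)
    fix zs assume zs: "zs \<in> paths (Suc t)"
    then have "length zs = Suc (Suc t)"
      by (simp add: paths_def)
    then have "zs = take (Suc t) zs @ [zs ! Suc t]"
      by (metis lessI take_Suc_conv_app_nth take_all_iff order_refl)
    moreover have "take (Suc t) zs \<in> paths t" "zs ! Suc t \<in> {y \<in> S. f y = bs (Suc t)}"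
      using zs by (auto simp: paths_def)
    ultimately show "zs \<in> (\<lambda>(xs, y). xs @ [y]) ` (paths t \<times> {y \<in> S. f y = bs (Suc t)})"
      by (metis (no_types, lifting) case_prod_conv image_eqI mem_Sigma_iff)
  qed (auto simp: paths_def nth_append le_Suc_eq)
  have weight_snoc: "weight (Suc t) (xs @ [y]) = weight t xs * P (xs ! t) y" if "xs \<in> paths t" for xs y
    using that by (auto simp: weight_def paths_def nth_append mult.assoc intro!: prod.cong)
  have "(\<Sum>zs\<in>paths (Suc t). weight (Suc t) zs)
      = (\<Sum>xs\<in>paths t. \<Sum>y\<in>{y \<in> S. f y = bs (Suc t)}. weight t xs * P (xs ! t) y)"
    unfolding paths_Suc sum.cartesian_product
    by (subst sum.reindex) (auto simp: inj_on_def weight_snoc intro!: sum.cong split: prod.splits)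
  also have "\<dots> = (\<Sum>xs\<in>paths t. weight t xs * K (bs t) (bs (Suc t)))"
    by (intro sum.cong) (auto simp: paths_def lump sum_distrib_left[symmetric])
  also have "\<dots> = (\<Sum>xs\<in>paths t. weight t xs) * K (bs t) (bs (Suc t))"
    by (simp add: sum_distrib_right)
  also have "(\<Sum>xs\<in>paths t. weight t xs) = (\<Sum>x\<in>{x \<in> S. f x = bs 0}. \<nu> x) * (\<Prod>k<t. K (bs k) (bs (Suc k)))"
    using Suc.IH by (simp only: paths_def weight_def)
  finally show ?case
    by (simp add: paths_def weight_def mult.assoc)
qed

lemma Fmove_eqI:
  assumes "\<And>i j. S i j + of_bool ((i1, j1) = (i, j)) + of_bool ((i2, j2) = (i, j))
                  = T i j + of_bool ((i1, j2) = (i, j)) + of_bool ((i2, j1) = (i, j))"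
    and "i1 \<noteq> i2" "j1 \<noteq> j2"
  shows "S = Fmove (i1, j1) (i2, j2) T"
proof (intro ext)
  fix i j
  show "S i j = Fmove (i1, j1) (i2, j2) T i j"
    using assms(1)[of i j] assms(2,3) by (auto simp: Fmove_def)
qed

lemma Fmove_degenerate:
  fixes S T :: "nat \<Rightarrow> nat \<Rightarrow> nat"
  assumes "\<And>i j. S i j + of_bool ((i1, j1) = (i, j)) + of_bool ((i2, j2) = (i, j))
                  = T i j + of_bool ((i1, j2) = (i, j)) + of_bool ((i2, j1) = (i, j))"
    and "i1 = i2 \<or> j1 = j2"
  shows "S = T"
proof (intro ext)
  fix i j
  show "S i j = T i j"
    using assms(1)[of i j] assms(2) by (elim disjE) (simp_all add: add_ac)
qed

lemma Fmove_commute: "Fmove c1 c2 T = Fmove c2 c1 T"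
  by (auto simp: Fmove_def fun_eq_iff)

lemma is_move_commute: "is_move lam mu T T' i1 j1 i2 j2 \<Longrightarrow> is_move lam mu T T' i2 j2 i1 j1"
  by (auto simp: is_move_def Fmove_commute)

lemma is_move_decreased_cells:
  assumes "is_move lam mu T T' i1 j1 i2 j2"
  shows "{(i, j). T' i j < T i j} = {(i1, j1), (i2, j2)}"
  using assms by (auto simp: is_move_def Fmove_def split: if_splits)

lemma is_move_unique:
  assumes "is_move lam mu T T' i1 j1 i2 j2" "is_move lam mu T T' k1 l1 k2 l2"
  shows "((k1, l1), (k2, l2)) = ((i1, j1), (i2, j2)) \<or> ((k1, l1), (k2, l2)) = ((i2, j2), (i1, j1))"
proof -
  have "{(i1, j1), (i2, j2)} = {(k1, l1), (k2, l2)}"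
    using is_move_decreased_cells[OF assms(1)] is_move_decreased_cells[OF assms(2)] by simp
  moreover have "(i1, j1) \<noteq> (i2, j2)"
    using assms(1) by (auto simp: is_move_def)
  ultimately show ?thesis
    by (auto simp: doubleton_eq_iff)
qed

lemma is_move_neq: "is_move lam mu T T' i1 j1 i2 j2 \<Longrightarrow> T' \<noteq> T"
  using is_move_decreased_cells by fastforce

lemma table_K_off_move:
  assumes "is_move lam mu T T' i1 j1 i2 j2"
  shows "table_K_off lam mu T T' = 2 * real (T i1 j1) * real (T i2 j2) / real (sum_list lam) ^ 2"
proof -
  have "v = 2 * real (T i1 j1) * real (T i2 j2) / real (sum_list lam) ^ 2"
    if "is_move lam mu T T' k1 l1 k2 l2" "v = 2 * real (T k1 l1) * real (T k2 l2) / real (sum_list lam) ^ 2"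
    for v k1 l1 k2 l2
    using is_move_unique[OF assms that(1)] that(2) by auto
  then show ?thesis
    unfolding table_K_off_def using assms is_move_neq[OF assms] by (auto intro!: some_equality)
qed

lemma table_K_off_no_move:
  "\<nexists>i1 j1 i2 j2. is_move lam mu T T' i1 j1 i2 j2 \<Longrightarrow> table_K_off lam mu T T' = 0"
  by (simp add: table_K_off_def)

section \<open>The table of a permutation\<close>

definition cell :: "nat list \<Rightarrow> nat list \<Rightarrow> (nat \<Rightarrow> nat) \<Rightarrow> nat \<Rightarrow> nat \<times> nat" where
  "cell lam mu x l = (block_index lam l, block_index mu (x l))"

context
  fixes n :: nat and lam mu :: "nat list"
  assumes lam_sum: "sum_list lam = n" and mu_sum: "sum_list mu = n"
begin

lemma cell_bounds:
  assumes "x permutes {1..n}" "l \<in> {1..n}"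
  shows "fst (cell lam mu x l) < length lam" "snd (cell lam mu x l) < length mu"
proof -
  have "x l \<in> {1..n}"
    using permutes_in_image[OF assms(1)] assms(2) by simp
  then show "fst (cell lam mu x l) < length lam" "snd (cell lam mu x l) < length mu"
    using block_index(1)[of l lam] block_index(1)[of "x l" mu] assms(2)
    by (simp_all add: cell_def lam_sum mu_sum)
qed

lemma table_of_eq_card_cell:
  assumes x: "x permutes {1..n}"
  shows "table_of lam mu x i j = card {l \<in> {1..n}. cell lam mu x l = (i, j)}"
proof (cases "i < length lam \<and> j < length mu")
  case True
  have "{l \<in> block lam i. x l \<in> block mu j} = {l \<in> {1..n}. cell lam mu x l = (i, j)}"
  proof (intro equalityI subsetI)
    fix l assume "l \<in> {l \<in> block lam i. x l \<in> block mu j}"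
    then show "l \<in> {l \<in> {1..n}. cell lam mu x l = (i, j)}"
      using True block_subset[of i lam] block_index_eqI
      by (auto simp: cell_def lam_sum simp del: atLeastAtMost_iff)
  next
    fix l assume l: "l \<in> {l \<in> {1..n}. cell lam mu x l = (i, j)}"
    then have "x l \<in> {1..n}"
      using permutes_in_image[OF x] by auto
    then show "l \<in> {l \<in> block lam i. x l \<in> block mu j}"
      using l block_index(2)[of l lam] block_index(2)[of "x l" mu]
      by (auto simp: cell_def lam_sum mu_sum simp del: atLeastAtMost_iff)
  qed
  then show ?thesis
    using True by (simp add: table_of_def)
next
  case False
  then have "{l \<in> {1..n}. cell lam mu x l = (i, j)} = {}"
    using cell_bounds[OF x] by (metis (mono_tags, lifting) empty_Collect_eq fst_conv snd_conv)
  then show ?thesis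
    using False by (simp only: table_of_def if_False card.empty)
qed

lemma table_of_in_tables:
  assumes x: "x permutes {1..n}"
  shows "table_of lam mu x \<in> tables lam mu"
proof -
  define A where "A = {1..n}"
  have fin: "finite {l \<in> A. P l}" for P
    by (simp add: A_def)
  have "(\<Sum>j<length mu. table_of lam mu x i j) = lam ! i" if i: "i < length lam" for i
  proof -
    have "(\<Sum>j<length mu. table_of lam mu x i j)
        = (\<Sum>j<length mu. card {l \<in> {l \<in> A. block_index lam l = i}. block_index mu (x l) = j})"
      by (intro sum.cong) (auto simp: table_of_eq_card_cell[OF x] cell_def A_def simp del: atLeastAtMost_iff
          intro!: arg_cong[where f = card])
    also have "\<dots> = card {l \<in> A. block_index lam l = i}"
      using cell_bounds[OF x] by (intro sum_card_fibres fin) (auto simp: cell_def A_def)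
    finally show ?thesis
      using card_block_index_fibre[OF i] by (simp add: A_def lam_sum)
  qed
  moreover have "(\<Sum>i<length lam. table_of lam mu x i j) = mu ! j" if j: "j < length mu" for j
  proof -
    have "(\<Sum>i<length lam. table_of lam mu x i j)
        = (\<Sum>i<length lam. card {l \<in> {l \<in> A. block_index mu (x l) = j}. block_index lam l = i})"
      by (intro sum.cong) (auto simp: table_of_eq_card_cell[OF x] cell_def A_def simp del: atLeastAtMost_iff
          intro!: arg_cong[where f = card])
    also have "\<dots> = card {l \<in> A. block_index mu (x l) = j}"
      using cell_bounds[OF x] by (intro sum_card_fibres fin) (auto simp: cell_def A_def)
    also have "\<dots> = card {m \<in> A. block_index mu m = j}"
      using permutes_imp_bij[OF x] by (intro card_filter_bij_betw) (simp add: A_def)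
    finally show ?thesis
      using card_block_index_fibre[OF j] by (simp add: A_def mu_sum)
  qed
  ultimately show ?thesis
    by (auto simp: tables_def table_of_def)
qed

lemma finite_tables: "finite (tables lam mu)"
proof -
  define B where "B = {..<length lam} \<times> {..<length mu}"
  define extend where "extend f = (\<lambda>i j. if (i, j) \<in> B then f (i, j) else 0)" for f :: "nat \<times> nat \<Rightarrow> nat"
  have "tables lam mu \<subseteq> extend ` (B \<rightarrow>\<^sub>E {0..n})"
  proof
    fix T assume T: "T \<in> tables lam mu"
    have "T i j \<le> n" if "(i, j) \<in> B" for i j
    proof -
      have "T i j \<le> (\<Sum>j'<length mu. T i j')"
        using that by (intro member_le_sum) (auto simp: B_def)
      also have "\<dots> = lam ! i"
        using T that by (auto simp: tables_def B_def)
      also have "\<dots> \<le> n"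
        using that lam_sum elem_le_sum_list[of i lam] by (simp add: B_def)
      finally show ?thesis .
    qed
    then have "restrict (\<lambda>(i, j). T i j) B \<in> B \<rightarrow>\<^sub>E {0..n}"
      by auto
    moreover have "T = extend (restrict (\<lambda>(i, j). T i j) B)"
      using T by (auto simp: extend_def tables_def B_def fun_eq_iff)
    ultimately show "T \<in> extend ` (B \<rightarrow>\<^sub>E {0..n})"
      by blast
  qed
  moreover have "finite (B \<rightarrow>\<^sub>E {0..n})"
    by (simp add: B_def finite_PiE)
  ultimately show ?thesis
    using finite_surj by blast
qed

lemma table_of_comp_transpose:
  assumes x: "x permutes {1..n}" and ab: "a \<in> {1..n}" "b \<in> {1..n}"
    and cells: "cell lam mu x a = (i1, j1)" "cell lam mu x b = (i2, j2)"
  shows "table_of lam mu (x \<circ> transpose a b)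
       = (if i1 = i2 \<or> j1 = j2 then table_of lam mu x else Fmove (i1, j1) (i2, j2) (table_of lam mu x))"
proof -
  have xt: "x \<circ> transpose a b permutes {1..n}"
    by (rule permutes_compose[OF permutes_swap_id[OF ab] x])
  have "card {l \<in> {1..n}. cell lam mu (x \<circ> transpose a b) l = (i, j)}
        + of_bool ((i1, j1) = (i, j)) + of_bool ((i2, j2) = (i, j))
      = card {l \<in> {1..n}. cell lam mu x l = (i, j)}
        + of_bool ((i1, j2) = (i, j)) + of_bool ((i2, j1) = (i, j))" for i j
    using card_fibre_comp_transpose[OF finite_atLeastAtMost ab,
        of "block_index lam" "\<lambda>l. block_index mu (x l)" "(i, j)"] cells
    by (simp add: cell_def)
  then have "table_of lam mu (x \<circ> transpose a b) i j + of_bool ((i1, j1) = (i, j)) + of_bool ((i2, j2) = (i, j))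
      = table_of lam mu x i j + of_bool ((i1, j2) = (i, j)) + of_bool ((i2, j1) = (i, j))" for i j
    by (simp only: table_of_eq_card_cell[OF x] table_of_eq_card_cell[OF xt])
  then show ?thesis
    using Fmove_eqI Fmove_degenerate by auto
qed

lemma table_of_comp_transpose_eq_iff:
  assumes x: "x permutes {1..n}" and ab: "a \<in> {1..n}" "b \<in> {1..n}"
    and cells: "cell lam mu x a = (i1, j1)" "cell lam mu x b = (i2, j2)"
    and ne: "T' \<noteq> table_of lam mu x"
  shows "table_of lam mu (x \<circ> transpose a b) = T' \<longleftrightarrow> is_move lam mu (table_of lam mu x) T' i1 j1 i2 j2"
proof -
  have "0 < table_of lam mu x i j" if "l \<in> {1..n}" "cell lam mu x l = (i, j)" for l i j
    using that by (auto simp: table_of_eq_card_cell[OF x] card_gt_0_iff simp del: atLeastAtMost_iff)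
  then have "0 < table_of lam mu x i1 j1" "0 < table_of lam mu x i2 j2"
    using ab cells by blast+
  moreover have "i1 < length lam" "j1 < length mu" "i2 < length lam" "j2 < length mu"
    using cell_bounds[OF x ab(1)] cell_bounds[OF x ab(2)] cells by simp_all
  ultimately show ?thesis
    using table_of_comp_transpose[OF x ab cells] ne by (auto simp: is_move_def)
qed

lemma card_transpositions_to_move:
  assumes x: "x permutes {1..n}" and mv: "is_move lam mu (table_of lam mu x) T' i1 j1 i2 j2"
  shows "card {(a, b) \<in> {1..n} \<times> {1..n}. table_of lam mu (x \<circ> transpose a b) = T'}
       = 2 * table_of lam mu x i1 j1 * table_of lam mu x i2 j2"
proof -
  define C where "C c = {l \<in> {1..n}. cell lam mu x l = c}" for c
  have move_iff: "table_of lam mu (x \<circ> transpose a b) = T' \<longleftrightarrow>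
      is_move lam mu (table_of lam mu x) T' (fst (cell lam mu x a)) (snd (cell lam mu x a))
        (fst (cell lam mu x b)) (snd (cell lam mu x b))"
    if "a \<in> {1..n}" "b \<in> {1..n}" for a b
    using table_of_comp_transpose_eq_iff[OF x that _ _ is_move_neq[OF mv]] by simp
  have "{(a, b) \<in> {1..n} \<times> {1..n}. table_of lam mu (x \<circ> transpose a b) = T'}
      = C (i1, j1) \<times> C (i2, j2) \<union> C (i2, j2) \<times> C (i1, j1)"
  proof (intro equalityI subsetI)
    fix p assume "p \<in> {(a, b) \<in> {1..n} \<times> {1..n}. table_of lam mu (x \<circ> transpose a b) = T'}"
    then obtain a b where p: "p = (a, b)" "a \<in> {1..n}" "b \<in> {1..n}"
      and "table_of lam mu (x \<circ> transpose a b) = T'"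
      by blast
    then have "is_move lam mu (table_of lam mu x) T' (fst (cell lam mu x a)) (snd (cell lam mu x a))
        (fst (cell lam mu x b)) (snd (cell lam mu x b))"
      using move_iff by blast
    from is_move_unique[OF mv this]
    have "(cell lam mu x a, cell lam mu x b) \<in> {((i1, j1), (i2, j2)), ((i2, j2), (i1, j1))}"
      by auto
    with p show "p \<in> C (i1, j1) \<times> C (i2, j2) \<union> C (i2, j2) \<times> C (i1, j1)"
      by (auto simp: C_def simp del: atLeastAtMost_iff)
  qed (use mv is_move_commute[OF mv] move_iff in \<open>auto simp: C_def\<close>)
  moreover have "C (i1, j1) \<inter> C (i2, j2) = {}"
    using mv by (auto simp: C_def is_move_def)
  moreover have "card (C (i, j)) = table_of lam mu x i j" for i j
    by (simp add: C_def table_of_eq_card_cell[OF x])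
  moreover have "finite (C c)" for c
    by (simp add: C_def)
  ultimately show ?thesis
    by (simp add: card_Un_disjoint card_cartesian_product Int_commute Times_Int_Times)
qed

lemma sum_rt_P_table_fibre_off:
  assumes x: "x permutes {1..n}" and ne: "T' \<noteq> table_of lam mu x"
  shows "(\<Sum>y\<in>{y. y permutes {1..n} \<and> table_of lam mu y = T'}. rt_P n x y)
       = table_K_off lam mu (table_of lam mu x) T'"
proof (cases "\<exists>i1 j1 i2 j2. is_move lam mu (table_of lam mu x) T' i1 j1 i2 j2")
  case True
  then obtain i1 j1 i2 j2 where mv: "is_move lam mu (table_of lam mu x) T' i1 j1 i2 j2"
    by blast
  show ?thesis
    unfolding sum_rt_P_eq_card[OF x] card_transpositions_to_move[OF x mv] table_K_off_move[OF mv] lam_sum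
    by simp
next
  case False
  have "table_of lam mu (x \<circ> transpose a b) \<noteq> T'" if "a \<in> {1..n}" "b \<in> {1..n}" for a b
  proof -
    obtain i1 j1 i2 j2 where "cell lam mu x a = (i1, j1)" "cell lam mu x b = (i2, j2)"
      by fastforce
    then show ?thesis
      using table_of_comp_transpose_eq_iff[OF x that _ _ ne] False by blast
  qed
  then have no_pairs: "{(a, b) \<in> {1..n} \<times> {1..n}. table_of lam mu (x \<circ> transpose a b) = T'} = {}"
    by blast
  show ?thesis
    unfolding sum_rt_P_eq_card[OF x] no_pairs table_K_off_no_move[OF False] by simp
qed

lemma sum_rt_P_table_fibre:
  assumes "1 \<le> n" and x: "x permutes {1..n}"
  shows "(\<Sum>y\<in>{y. y permutes {1..n} \<and> table_of lam mu y = T'}. rt_P n x y) = table_K lam mu (table_of lam mu x) T'"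
proof (cases "T' = table_of lam mu x")
  case True
  define T where "T = table_of lam mu x"
  define fibre_sum where "fibre_sum T'' = (\<Sum>y\<in>{y. y permutes {1..n} \<and> table_of lam mu y = T''}. rt_P n x y)" for T''
  have "1 = (\<Sum>y\<in>{y. y permutes {1..n}}. rt_P n x y)"
    using sum_rt_P_permutations[OF assms] by simp
  also have "\<dots> = (\<Sum>T''\<in>tables lam mu. fibre_sum T'')"
    unfolding fibre_sum_def using table_of_in_tables finite_tables
    by (subst sum.group[symmetric, where g = "table_of lam mu"]) (auto simp: finite_permutations)
  also have "\<dots> = fibre_sum T + (\<Sum>T''\<in>tables lam mu - {T}. fibre_sum T'')"
    using table_of_in_tables[OF x] finite_tables by (simp add: T_def sum.remove)
  also have "(\<Sum>T''\<in>tables lam mu - {T}. fibre_sum T'') = (\<Sum>T''\<in>tables lam mu - {T}. table_K_off lam mu T T'')"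
    using sum_rt_P_table_fibre_off[OF x] by (intro sum.cong) (auto simp: fibre_sum_def T_def)
  finally show ?thesis
    using True by (simp add: table_K_def fibre_sum_def T_def)
next
  case False
  then show ?thesis
    using sum_rt_P_table_fibre_off[OF x] by (simp add: table_K_def)
qed

end

theorem lemma2p1:
  fixes n :: nat and lam mu :: "nat list" and \<nu> :: "(nat \<Rightarrow> nat) \<Rightarrow> real"
  assumes "1 \<le> n" and "is_partition n lam" and "is_partition n mu"
    and "\<forall>x. x permutes {1..n} \<longrightarrow> 0 \<le> \<nu> x"
    and "(\<Sum>x\<in>{x. x permutes {1..n}}. \<nu> x) = 1"
  shows "\<forall>(t::nat) (Ts :: (nat \<Rightarrow> nat \<Rightarrow> nat) list).
           length Ts = Suc t \<and> set Ts \<subseteq> tables lam mu \<longrightarrow>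
           (\<Sum>xs\<in>{xs. length xs = Suc t \<and>
                      (\<forall>k\<le>t. xs ! k permutes {1..n} \<and> table_of lam mu (xs ! k) = Ts ! k)}.
              \<nu> (xs ! 0) * (\<Prod>k<t. rt_P n (xs ! k) (xs ! Suc k)))
           = (\<Sum>x\<in>{x. x permutes {1..n} \<and> table_of lam mu x = Ts ! 0}. \<nu> x)
             * (\<Prod>k<t. table_K lam mu (Ts ! k) (Ts ! Suc k))"
proof (intro allI impI)
  fix t :: nat and Ts :: "(nat \<Rightarrow> nat \<Rightarrow> nat) list"
  have "sum_list lam = n" "sum_list mu = n"
    using assms(2,3) by (simp_all add: is_partition_def)
  then have "(\<Sum>y\<in>{y \<in> {x. x permutes {1..n}}. table_of lam mu y = T'}. rt_P n x y)
      = table_K lam mu (table_of lam mu x) T'" if "x \<in> {x. x permutes {1..n}}" for x T'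
    using sum_rt_P_table_fibre[OF _ _ assms(1)] that by simp
  from lumped_path_sum[where S = "{x. x permutes {1..n}}" and f = "table_of lam mu" and P = "rt_P n"
      and K = "table_K lam mu" and bs = "(!) Ts", OF this]
  show "(\<Sum>xs\<in>{xs. length xs = Suc t \<and>
                      (\<forall>k\<le>t. xs ! k permutes {1..n} \<and> table_of lam mu (xs ! k) = Ts ! k)}.
              \<nu> (xs ! 0) * (\<Prod>k<t. rt_P n (xs ! k) (xs ! Suc k)))
           = (\<Sum>x\<in>{x. x permutes {1..n} \<and> table_of lam mu x = Ts ! 0}. \<nu> x)
             * (\<Prod>k<t. table_K lam mu (Ts ! k) (Ts ! Suc k))"
    by simp
qed

end
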